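(* Let $\kappa\geq\aleph_1$ and let $\Omega$ be a complete semiring. The contraction $\mathcal{C}:\mathrm{Trisk}_\Omega(\mathbf{Set}_\kappa)\to\mathrm{Rel}_\Omega(\mathbf{Set}_\kappa)$ is a strict monoidal functor for both monoidal structures, i.e. $\mathcal{C}(T\otimes T')=\mathcal{C}(T)\otimes\mathcal{C}(T')$ and $\mathcal{C}(T\oplus T')=\mathcal{C}(T)\oplus\mathcal{C}(T')$ for all triskells $T,T'$.
   Context: $\mathbf{Set}_\kappa$ is the category of sets of cardinality less than $\kappa$. A complete semiring is a semiring in which sums of arbitrary families are defined. A triskell from $S$ to $T$ with weights in $\Omega$ (using its multiplicative monoid) is a tuple $(E,S,T,\Omega,s,t,w)$ with $s:E\to S$, $t:E\to T$, $w:E\to\Omega$. Composition of $(E,S,T,\Omega,s,t,w)$ and $(E',T,T',\Omega,s',t',w')$ has edge set $\{(e,e')\in E\times E': t(e)=s'(e')\}$, source $s(e)$, target $t'(e')$, weight $w(e)w'(e')$; $\mathrm{Trisk}_\Omega(\mathbf{Set}_\kappa)$ has sets as objects and triskells up to isomorphism as morphisms. On triskells, $T\otimes T'=(E\times E',S\times S',T\times T',\Omega,s\times s',t\times t',(e,e')\mapsto w(e)w'(e'))$ and $T\oplus T'=(E+E',S+S',T+T',\Omega,s+s',t+t',(w,w'))$. $\mathrm{Rel}_\Omega(\mathbf{Set}_\kappa)$ has sets as objects, morphisms $A\to B$ the matrices $M=(m_{a,b})\in\Omega^{A\times B}$, composite of $M:A\to B$ and $N:B\to C$ given by $(a,c)\mapsto\sum_{b\in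 B}m_{a,b}n_{b,c}$, identity matrices as identities; $(M\otimes M')_{(a,a'),(b,b')}=m_{a,b}m'_{a',b'}$ and $M\oplus M'$ is the block-diagonal matrix on $(A+A')\times(B+B')$. The contraction functor $\mathcal{C}$ is the identity on objects and sends a triskell $T=(E,A,B,\Omega,s,t,w)$ to the matrix $\mathcal{C}(T)_{a,b}=\sum_{e\in E,\ s(e)=a,\ t(e)=b}w(e)$. *)

theory Defs
  imports Main
begin

unbundle cardinal_syntax

text \<open>In HOL a
single operator cannot be polymorphic in the index type inside one statement, so we
axiomatise a sum operator on index sets of a fixed type 'i (complete_sum), and a
compatibility condition (sum_compat) expressing that operators on two index types
are restrictions of one and the same complete-semiring sum (invariance under
injective reindexing).\<close>

definition complete_sum ::
  "('i set \<Rightarrow> ('i \<Rightarrow> 'w::{semiring_0,monoid_mult}) \<Rightarrow> 'w) \<Rightarrow> bool" where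
  "complete_sum \<sigma> \<longleftrightarrow>
     (\<forall>f. \<sigma> {} f = 0) \<and>
     (\<forall>i f. \<sigma> {i} f = f i) \<and>
     (\<forall>i j f. i \<noteq> j \<longrightarrow> \<sigma> {i, j} f = f i + f j) \<and>
     (\<forall>I f g. (\<forall>i\<in>I. f i = g i) \<longrightarrow> \<sigma> I f = \<sigma> I g) \<and>
     (\<forall>I f (p :: 'i \<Rightarrow> 'i). \<sigma> I f = \<sigma> (p ` I) (\<lambda>j. \<sigma> {i\<in>I. p i = j} f)) \<and>
     (\<forall>I f c. \<sigma> I (\<lambda>i. c * f i) = c * \<sigma> I f) \<and>
     (\<forall>I f c. \<sigma> I (\<lambda>i. f i * c) = \<sigma> I f * c)"

definition sum_compat ::
  "('i set \<Rightarrow> ('i \<Rightarrow> 'w) \<Rightarrow> 'w) \<Rightarrow> ('j set \<Rightarrow> ('j \<Rightarrow> 'w) \<Rightarrow> 'w) \<Rightarrow> bool" where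
  "sum_compat \<sigma> \<tau> \<longleftrightarrow>
     (\<forall>I (h :: 'i \<Rightarrow> 'j) f. inj_on h I \<longrightarrow> \<tau> (h ` I) f = \<sigma> I (f \<circ> h))"

record ('e, 'a, 'b, 'w) triskell =
  tr_edges :: "'e set"
  tr_dom   :: "'a set"
  tr_cod   :: "'b set"
  tr_src   :: "'e \<Rightarrow> 'a"
  tr_tgt   :: "'e \<Rightarrow> 'b"
  tr_wt    :: "'e \<Rightarrow> 'w"

definition wf_trisk :: "'k rel \<Rightarrow> ('e, 'a, 'b, 'w) triskell \<Rightarrow> bool" where
  "wf_trisk \<kappa> T \<longleftrightarrow>
     tr_src T ` tr_edges T \<subseteq> tr_dom T \<and> tr_tgt T ` tr_edges T \<subseteq> tr_cod T \<and>
     |tr_edges T| <o \<kappa> \<and> |tr_dom T| <o \<kappa> \<and> |tr_cod T| <o \<kappa>"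

definition trisk_tensor ::
  "('e, 'a, 'b, 'w::times) triskell \<Rightarrow> ('f, 'c, 'd, 'w) triskell
     \<Rightarrow> ('e \<times> 'f, 'a \<times> 'c, 'b \<times> 'd, 'w) triskell" where
  "trisk_tensor T U =
     \<lparr> tr_edges = tr_edges T \<times> tr_edges U,
       tr_dom = tr_dom T \<times> tr_dom U,
       tr_cod = tr_cod T \<times> tr_cod U,
       tr_src = map_prod (tr_src T) (tr_src U),
       tr_tgt = map_prod (tr_tgt T) (tr_tgt U),
       tr_wt = (\<lambda>(e, e'). tr_wt T e * tr_wt U e') \<rparr>"

definition trisk_plus ::
  "('e, 'a, 'b, 'w) triskell \<Rightarrow> ('f, 'c, 'd, 'w) triskell
     \<Rightarrow> ('e + 'f, 'a + 'c, 'b + 'd, 'w) triskell" where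
  "trisk_plus T U =
     \<lparr> tr_edges = tr_edges T <+> tr_edges U,
       tr_dom = tr_dom T <+> tr_dom U,
       tr_cod = tr_cod T <+> tr_cod U,
       tr_src = map_sum (tr_src T) (tr_src U),
       tr_tgt = map_sum (tr_tgt T) (tr_tgt U),
       tr_wt = case_sum (tr_wt T) (tr_wt U) \<rparr>"

text \<open>A matrix A -> B; entries outside A x B are fixed to 0 (extensional convention).\<close>
record ('a, 'b, 'w) matrix =
  m_rows :: "'a set"
  m_cols :: "'b set"
  m_ent  :: "'a \<Rightarrow> 'b \<Rightarrow> 'w"

definition mat_tensor ::
  "('a, 'b, 'w::{times,zero}) matrix \<Rightarrow> ('c, 'd, 'w) matrix
     \<Rightarrow> ('a \<times> 'c, 'b \<times> 'd, 'w) matrix" where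
  "mat_tensor M N =
     \<lparr> m_rows = m_rows M \<times> m_rows N,
       m_cols = m_cols M \<times> m_cols N,
       m_ent = (\<lambda>(a, a') (b, b').
          if (a, a') \<in> m_rows M \<times> m_rows N \<and> (b, b') \<in> m_cols M \<times> m_cols N
          then m_ent M a b * m_ent N a' b' else 0) \<rparr>"

definition mat_plus ::
  "('a, 'b, 'w::zero) matrix \<Rightarrow> ('c, 'd, 'w) matrix
     \<Rightarrow> ('a + 'c, 'b + 'd, 'w) matrix" where
  "mat_plus M N =
     \<lparr> m_rows = m_rows M <+> m_rows N,
       m_cols = m_cols M <+> m_cols N,
       m_ent = (\<lambda>x y.
          if x \<in> m_rows M <+> m_rows N \<and> y \<in> m_cols M <+> m_cols N then
            (case (x, y) of
               (Inl a, Inl b) \<Rightarrow> m_ent M a b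
             | (Inr a, Inr b) \<Rightarrow> m_ent N a b
             | _ \<Rightarrow> 0)
          else 0) \<rparr>"

definition contraction ::
  "('e set \<Rightarrow> ('e \<Rightarrow> 'w::zero) \<Rightarrow> 'w) \<Rightarrow> ('e, 'a, 'b, 'w) triskell \<Rightarrow> ('a, 'b, 'w) matrix" where
  "contraction \<sigma> T =
     \<lparr> m_rows = tr_dom T,
       m_cols = tr_cod T,
       m_ent = (\<lambda>a b. if a \<in> tr_dom T \<and> b \<in> tr_cod T
                       then \<sigma> {e \<in> tr_edges T. tr_src T e = a \<and> tr_tgt T e = b} (tr_wt T)
                       else 0) \<rparr>"

end

theory Submission
  imports Defs
begin

text \<open>An entry of the contraction of a tensor product is a sum over a product of edge
sets, which splits as a product of sums by grouping along the first factor; an entry of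
the contraction of a direct sum is a sum over an injective image of the edges of one
summand, or over the empty set off the diagonal blocks.\<close>

lemma complete_sum_empty: "complete_sum \<sigma> \<Longrightarrow> \<sigma> {} f = 0"
  unfolding complete_sum_def by (elim conjE allE)

lemma complete_sum_cong:
  "complete_sum \<sigma> \<Longrightarrow> (\<And>i. i \<in> I \<Longrightarrow> f i = g i) \<Longrightarrow> \<sigma> I f = \<sigma> I g"
  unfolding complete_sum_def by (elim conjE) (erule allE, erule allE, erule allE, erule mp, blast)

lemma complete_sum_group:
  "complete_sum \<sigma> \<Longrightarrow> \<sigma> I f = \<sigma> (p ` I) (\<lambda>j. \<sigma> {i\<in>I. p i = j} f)"
  unfolding complete_sum_def by (elim conjE allE)

lemma complete_sum_mult_left: "complete_sum \<sigma> \<Longrightarrow> \<sigma> I (\<lambda>i. c * f i) = c * \<sigma> I f"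
  unfolding complete_sum_def by (elim conjE allE)

lemma complete_sum_mult_right: "complete_sum \<sigma> \<Longrightarrow> \<sigma> I (\<lambda>i. f i * c) = \<sigma> I f * c"
  unfolding complete_sum_def by (elim conjE allE)

lemma sum_compat_reindex:
  "sum_compat \<sigma> \<tau> \<Longrightarrow> inj_on h I \<Longrightarrow> \<tau> (h ` I) f = \<sigma> I (f \<circ> h)"
  unfolding sum_compat_def by (elim allE) (erule mp)

lemma complete_sum_Times:
  fixes \<sigma>1 :: "'i set \<Rightarrow> ('i \<Rightarrow> 'w::{semiring_0,monoid_mult}) \<Rightarrow> 'w"
    and \<sigma>2 :: "'j set \<Rightarrow> ('j \<Rightarrow> 'w) \<Rightarrow> 'w"
    and \<sigma> :: "('i \<times> 'j) set \<Rightarrow> ('i \<times> 'j \<Rightarrow> 'w) \<Rightarrow> 'w"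
  assumes c1: "complete_sum \<sigma>1" and c2: "complete_sum \<sigma>2" and c: "complete_sum \<sigma>"
    and s1: "sum_compat \<sigma>1 \<sigma>" and s2: "sum_compat \<sigma>2 \<sigma>"
  shows "\<sigma> (I \<times> J) (\<lambda>(i, j). f i * g j) = \<sigma>1 I f * \<sigma>2 J g"
proof (cases "J = {}")
  case True
  then show ?thesis using complete_sum_empty[OF c] complete_sum_empty[OF c2] by simp
next
  case False
  \<comment> \<open>Grouping stays inside the index type, so the second coordinate is collapsed to a
      fixed dummy value rather than projected away.\<close>
  define j0 :: 'j where "j0 = undefined"
  define p where "p = (\<lambda>(i::'i, j::'j). (i, j0))"
  let ?F = "\<lambda>(i, j). f i * g j"
  have image: "p ` (I \<times> J) = (\<lambda>i. (i, j0)) ` I" using False unfolding p_def by auto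
  have fibre: "\<sigma> {x \<in> I \<times> J. p x = (i, j0)} ?F = f i * \<sigma>2 J g" if "i \<in> I" for i
  proof -
    have "{x \<in> I \<times> J. p x = (i, j0)} = Pair i ` J" using that unfolding p_def by auto
    then have "\<sigma> {x \<in> I \<times> J. p x = (i, j0)} ?F = \<sigma>2 J (\<lambda>j. f i * g j)"
      using sum_compat_reindex[OF s2, of "Pair i" J ?F] by (simp add: inj_on_def o_def)
    also have "\<dots> = f i * \<sigma>2 J g" by (rule complete_sum_mult_left[OF c2])
    finally show ?thesis .
  qed
  have "\<sigma> (I \<times> J) ?F = \<sigma> ((\<lambda>i. (i, j0)) ` I) (\<lambda>x. \<sigma> {y \<in> I \<times> J. p y = x} ?F)"
    unfolding image[symmetric] by (rule complete_sum_group[OF c])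
  also have "\<dots> = \<sigma>1 I (\<lambda>i. \<sigma> {x \<in> I \<times> J. p x = (i, j0)} ?F)"
    by (subst sum_compat_reindex[OF s1]) (simp_all add: inj_on_def o_def)
  also have "\<dots> = \<sigma>1 I (\<lambda>i. f i * \<sigma>2 J g)"
    using fibre by (rule complete_sum_cong[OF c1])
  also have "\<dots> = \<sigma>1 I f * \<sigma>2 J g" by (rule complete_sum_mult_right[OF c1])
  finally show ?thesis .
qed

definition tr_edges_between :: "('e, 'a, 'b, 'w) triskell \<Rightarrow> 'a \<Rightarrow> 'b \<Rightarrow> 'e set" where
  "tr_edges_between T a b = {e \<in> tr_edges T. tr_src T e = a \<and> tr_tgt T e = b}"

lemma Inl_in_Plus_iff [simp]: "Inl a \<in> A <+> B \<longleftrightarrow> a \<in> A"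
  by auto

lemma Inr_in_Plus_iff [simp]: "Inr b \<in> A <+> B \<longleftrightarrow> b \<in> B"
  by auto

lemma contraction_simps [simp]:
  "m_rows (contraction \<sigma> T) = tr_dom T"
  "m_cols (contraction \<sigma> T) = tr_cod T"
  "m_ent (contraction \<sigma> T) a b =
     (if a \<in> tr_dom T \<and> b \<in> tr_cod T then \<sigma> (tr_edges_between T a b) (tr_wt T) else 0)"
  by (simp_all add: contraction_def tr_edges_between_def)

lemma trisk_tensor_simps [simp]:
  "tr_dom (trisk_tensor T U) = tr_dom T \<times> tr_dom U"
  "tr_cod (trisk_tensor T U) = tr_cod T \<times> tr_cod U"
  "tr_wt (trisk_tensor T U) = (\<lambda>(e, e'). tr_wt T e * tr_wt U e')"
  "tr_edges_between (trisk_tensor T U) (a, a') (b, b') =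
     tr_edges_between T a b \<times> tr_edges_between U a' b'"
  by (auto simp: tr_edges_between_def trisk_tensor_def)

lemma trisk_plus_simps [simp]:
  "tr_dom (trisk_plus T U) = tr_dom T <+> tr_dom U"
  "tr_cod (trisk_plus T U) = tr_cod T <+> tr_cod U"
  "tr_wt (trisk_plus T U) = case_sum (tr_wt T) (tr_wt U)"
  "tr_edges_between (trisk_plus T U) (Inl a) (Inl b) = Inl ` tr_edges_between T a b"
  "tr_edges_between (trisk_plus T U) (Inr c) (Inr d) = Inr ` tr_edges_between U c d"
  "tr_edges_between (trisk_plus T U) (Inl a) (Inr d) = {}"
  "tr_edges_between (trisk_plus T U) (Inr c) (Inl b) = {}"
  by (auto simp: tr_edges_between_def trisk_plus_def)

lemma mat_tensor_simps [simp]: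
  "m_rows (mat_tensor M N) = m_rows M \<times> m_rows N"
  "m_cols (mat_tensor M N) = m_cols M \<times> m_cols N"
  "m_ent (mat_tensor M N) (a, a') (b, b') =
     (if a \<in> m_rows M \<and> a' \<in> m_rows N \<and> b \<in> m_cols M \<and> b' \<in> m_cols N
      then m_ent M a b * m_ent N a' b' else 0)"
  by (auto simp: mat_tensor_def)

lemma mat_plus_simps [simp]:
  "m_rows (mat_plus M N) = m_rows M <+> m_rows N"
  "m_cols (mat_plus M N) = m_cols M <+> m_cols N"
  "m_ent (mat_plus M N) (Inl a) (Inl b) =
     (if a \<in> m_rows M \<and> b \<in> m_cols M then m_ent M a b else 0)"
  "m_ent (mat_plus M N) (Inr c) (Inr d) =
     (if c \<in> m_rows N \<and> d \<in> m_cols N then m_ent N c d else 0)"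
  "m_ent (mat_plus M N) (Inl a) (Inr d) = 0"
  "m_ent (mat_plus M N) (Inr c) (Inl b) = 0"
  by (auto simp: mat_plus_def)

lemma contraction_trisk_tensor:
  assumes "complete_sum \<sigma>1" "complete_sum \<sigma>2" "complete_sum \<sigma>"
    and "sum_compat \<sigma>1 \<sigma>" "sum_compat \<sigma>2 \<sigma>"
  shows "contraction \<sigma> (trisk_tensor T U) = mat_tensor (contraction \<sigma>1 T) (contraction \<sigma>2 U)"
proof (rule matrix.equality)
  have "m_ent (contraction \<sigma> (trisk_tensor T U)) (a, a') (b, b') =
        m_ent (mat_tensor (contraction \<sigma>1 T) (contraction \<sigma>2 U)) (a, a') (b, b')"
    for a a' b b'
    using complete_sum_Times[OF assms, of "tr_edges_between T a b" "tr_edges_between U a' b'"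
        "tr_wt T" "tr_wt U"]
    by auto
  then show "m_ent (contraction \<sigma> (trisk_tensor T U)) =
             m_ent (mat_tensor (contraction \<sigma>1 T) (contraction \<sigma>2 U))"
    by (intro ext) (simp add: split_paired_all)
qed simp_all

lemma contraction_trisk_plus:
  assumes "complete_sum \<sigma>" and "sum_compat \<sigma>1 \<sigma>" and "sum_compat \<sigma>2 \<sigma>"
  shows "contraction \<sigma> (trisk_plus T U) = mat_plus (contraction \<sigma>1 T) (contraction \<sigma>2 U)"
proof (rule matrix.equality)
  have "m_ent (contraction \<sigma> (trisk_plus T U)) x y =
        m_ent (mat_plus (contraction \<sigma>1 T) (contraction \<sigma>2 U)) x y" for x y
  proof (cases x; cases y)
    fix a b assume "x = Inl a" "y = Inl b"
    then show ?thesis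
      using sum_compat_reindex[OF assms(2), of Inl "tr_edges_between T a b"
          "case_sum (tr_wt T) (tr_wt U)"]
      by (simp add: o_def)
  next
    fix a b assume "x = Inr a" "y = Inr b"
    then show ?thesis
      using sum_compat_reindex[OF assms(3), of Inr "tr_edges_between U a b"
          "case_sum (tr_wt T) (tr_wt U)"]
      by (simp add: o_def)
  qed (simp_all add: complete_sum_empty[OF assms(1)])
  then show "m_ent (contraction \<sigma> (trisk_plus T U)) =
             m_ent (mat_plus (contraction \<sigma>1 T) (contraction \<sigma>2 U))"
    by (intro ext)
qed simp_all

theorem theorem14:
  fixes \<kappa> :: "'k rel"
    and \<sigma>1 :: "'e1 set \<Rightarrow> ('e1 \<Rightarrow> 'w::{semiring_0,monoid_mult}) \<Rightarrow> 'w"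
    and \<sigma>2 :: "'e2 set \<Rightarrow> ('e2 \<Rightarrow> 'w) \<Rightarrow> 'w"
    and \<sigma>t :: "('e1 \<times> 'e2) set \<Rightarrow> ('e1 \<times> 'e2 \<Rightarrow> 'w) \<Rightarrow> 'w"
    and \<sigma>p :: "('e1 + 'e2) set \<Rightarrow> ('e1 + 'e2 \<Rightarrow> 'w) \<Rightarrow> 'w"
    and T :: "('e1, 'a1, 'b1, 'w) triskell"
    and T' :: "('e2, 'a2, 'b2, 'w) triskell"
  assumes "Card_order \<kappa>" and "ordLess2 natLeq \<kappa>"
    and "complete_sum \<sigma>1" and "complete_sum \<sigma>2"
    and "complete_sum \<sigma>t" and "complete_sum \<sigma>p"
    and "sum_compat \<sigma>1 \<sigma>t" and "sum_compat \<sigma>2 \<sigma>t"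
    and "sum_compat \<sigma>1 \<sigma>p" and "sum_compat \<sigma>2 \<sigma>p"
    and "wf_trisk \<kappa> T" and "wf_trisk \<kappa> T'"
  shows "contraction \<sigma>t (trisk_tensor T T') = mat_tensor (contraction \<sigma>1 T) (contraction \<sigma>2 T')
         \<and> contraction \<sigma>p (trisk_plus T T') = mat_plus (contraction \<sigma>1 T) (contraction \<sigma>2 T')"
  using contraction_trisk_tensor[OF assms(3,4,5,7,8)] contraction_trisk_plus[OF assms(6,9,10)]
  by blast

end
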